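(* Let $n\ge 2$ and let $G\le S_n$ be a permutation group on an $n$-set $\Omega$. The following are equivalent: (1) for every transformation $t\in T_n$ of rank $2$, the semigroup $\langle G,t\rangle$ satisfies $\langle G,t\rangle=EG$, where $E$ is the set of idempotents of $\langle G,t\rangle$ (i.e. $\langle G,t\rangle$ is strongly factorizable); (2) $G$ is primitive.
   Context: $T_n$ is the full transformation monoid on $\Omega$ and $S_n$ the symmetric group on $\Omega$; maps act on the right and are composed left to right. The rank of $t\in T_n$ is $|\Omega t|$. $\langle G,t\rangle$ denotes the subsemigroup of $T_n$ generated by $G\cup\{t\}$, and $EG=\{eg: e\in E,\ g\in G\}$. *)

theory Defs
  imports "HOL-Combinatorics.Permutations"
begin

text \<open>Maps act on the right and are
composed left to right: the product s t means first s, then t.\<close>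

definition transformation :: "'a set \<Rightarrow> ('a \<Rightarrow> 'a) \<Rightarrow> bool" where
  "transformation \<Omega> t \<longleftrightarrow> t ` \<Omega> \<subseteq> \<Omega> \<and> (\<forall>x. x \<notin> \<Omega> \<longrightarrow> t x = x)"

definition rank_on :: "'a set \<Rightarrow> ('a \<Rightarrow> 'a) \<Rightarrow> nat" where
  "rank_on \<Omega> t = card (t ` \<Omega>)"

definition rcomp :: "('a \<Rightarrow> 'a) \<Rightarrow> ('a \<Rightarrow> 'a) \<Rightarrow> ('a \<Rightarrow> 'a)" (infixl "\<cdot>" 70) where
  "s \<cdot> t = t \<circ> s"

inductive_set sgen :: "('a \<Rightarrow> 'a) set \<Rightarrow> ('a \<Rightarrow> 'a) set" for A where
  base: "a \<in> A \<Longrightarrow> a \<in> sgen A"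
| step: "a \<in> sgen A \<Longrightarrow> b \<in> sgen A \<Longrightarrow> a \<cdot> b \<in> sgen A"

definition idempotents :: "('a \<Rightarrow> 'a) set \<Rightarrow> ('a \<Rightarrow> 'a) set" where
  "idempotents S = {e \<in> S. e \<cdot> e = e}"

definition setprod :: "('a \<Rightarrow> 'a) set \<Rightarrow> ('a \<Rightarrow> 'a) set \<Rightarrow> ('a \<Rightarrow> 'a) set" where
  "setprod E G = {e \<cdot> g | e g. e \<in> E \<and> g \<in> G}"

definition perm_group :: "'a set \<Rightarrow> ('a \<Rightarrow> 'a) set \<Rightarrow> bool" where
  "perm_group \<Omega> G \<longleftrightarrow> (\<forall>g\<in>G. g permutes \<Omega>) \<and> id \<in> G \<and>
     (\<forall>g\<in>G. \<forall>h\<in>G. g \<cdot> h \<in> G) \<and> (\<forall>g\<in>G. inv g \<in> G)"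

definition transitive_on :: "'a set \<Rightarrow> ('a \<Rightarrow> 'a) set \<Rightarrow> bool" where
  "transitive_on \<Omega> G \<longleftrightarrow> (\<forall>x\<in>\<Omega>. \<forall>y\<in>\<Omega>. \<exists>g\<in>G. g x = y)"

definition is_block :: "'a set \<Rightarrow> ('a \<Rightarrow> 'a) set \<Rightarrow> 'a set \<Rightarrow> bool" where
  "is_block \<Omega> G B \<longleftrightarrow> B \<subseteq> \<Omega> \<and> (\<forall>g\<in>G. g ` B = B \<or> g ` B \<inter> B = {})"

definition primitive :: "'a set \<Rightarrow> ('a \<Rightarrow> 'a) set \<Rightarrow> bool" where
  "primitive \<Omega> G \<longleftrightarrow> transitive_on \<Omega> G \<and>
     (\<forall>B. is_block \<Omega> G B \<longrightarrow> card B \<le> 1 \<or> B = \<Omega>)"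

end

theory Submission
  imports Defs
begin

text \<open>Both conditions are equivalent to the following property of \<open>G\<close>: for all distinct
\<open>a, b \<in> \<Omega>\<close> and every proper nonempty \<open>C \<subset> \<Omega>\<close> some \<open>h \<in> G\<close> maps \<open>a\<close> into \<open>C\<close> and \<open>b\<close> out of
\<open>C\<close>. A transformation \<open>s\<close> of a semigroup containing \<open>G\<close> lies in \<open>EG\<close> exactly when \<open>s h\<close> fixes
the image of \<open>s\<close> pointwise for some \<open>h \<in> G\<close>: then \<open>s h\<close> is idempotent and \<open>s = (s h) h\<inverse>\<close>.
Elements of \<open>\<langle>G, t\<rangle>\<close> outside \<open>G\<close> have rank at most 2, and for a rank 2 map with image
\<open>{a, b}\<close> and kernel classes \<open>C\<close>, \<open>\<Omega> - C\<close> the criterion asks precisely for \<open>h a \<in> C\<close>, \<open>h b \<notin> C\<close>.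
If \<open>G\<close> is primitive, the component of \<open>a\<close> in the orbital graph of \<open>(a, b)\<close> is a block
containing \<open>a\<close> and \<open>b\<close>, hence all of \<open>\<Omega>\<close>, so some orbital edge leaves \<open>C\<close>. Conversely a
nontrivial block, or the complement of an orbit, is a set \<open>C\<close> that \<open>G\<close> cannot split.\<close>

definition crosses_all_cuts :: "'a set \<Rightarrow> ('a \<Rightarrow> 'a) set \<Rightarrow> bool" where
  "crosses_all_cuts \<Omega> G \<longleftrightarrow>
     (\<forall>a\<in>\<Omega>. \<forall>b\<in>\<Omega>. a \<noteq> b \<longrightarrow>
        (\<forall>C\<subseteq>\<Omega>. C \<noteq> {} \<longrightarrow> C \<noteq> \<Omega> \<longrightarrow> (\<exists>h\<in>G. h a \<in> C \<and> h b \<notin> C)))"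

lemma perm_group_permutes: "perm_group \<Omega> G \<Longrightarrow> g \<in> G \<Longrightarrow> g permutes \<Omega>"
  by (simp add: perm_group_def)

lemma perm_group_inv: "perm_group \<Omega> G \<Longrightarrow> g \<in> G \<Longrightarrow> inv g \<in> G"
  by (simp add: perm_group_def)

lemma perm_group_id: "perm_group \<Omega> G \<Longrightarrow> id \<in> G"
  by (simp add: perm_group_def)

lemma perm_group_comp: "perm_group \<Omega> G \<Longrightarrow> g \<in> G \<Longrightarrow> h \<in> G \<Longrightarrow> h \<circ> g \<in> G"
  unfolding perm_group_def rcomp_def by blast

lemma perm_group_funpow: "perm_group \<Omega> G \<Longrightarrow> g \<in> G \<Longrightarrow> g ^^ n \<in> G"
  by (induction n) (simp_all add: perm_group_id perm_group_comp)

lemma perm_group_transformation: "perm_group \<Omega> G \<Longrightarrow> g \<in> G \<Longrightarrow> transformation \<Omega> g"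
  by (auto dest: perm_group_permutes simp: transformation_def permutes_in_image permutes_not_in)

subsection \<open>Transformations in the generated semigroup\<close>

lemma transformation_rcomp:
  "transformation \<Omega> s \<Longrightarrow> transformation \<Omega> t \<Longrightarrow> transformation \<Omega> (s \<cdot> t)"
  unfolding transformation_def rcomp_def by auto

lemma transformation_sgen:
  assumes "\<forall>a\<in>A. transformation \<Omega> a" and "s \<in> sgen A"
  shows "transformation \<Omega> s"
  using assms(2)
proof induction
  case (base a)
  then show ?case using assms(1) by blast
next
  case (step x y)
  then show ?case by (simp add: transformation_rcomp)
qed

lemma card_image_rcomp_le_left:
  "finite \<Omega> \<Longrightarrow> card ((s \<cdot> t) ` \<Omega>) \<le> card (s ` \<Omega>)"
  unfolding rcomp_def image_comp[symmetric] by (simp add: card_image_le)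

lemma card_image_rcomp_le_right:
  assumes "finite \<Omega>" and "transformation \<Omega> s"
  shows "card ((s \<cdot> t) ` \<Omega>) \<le> card (t ` \<Omega>)"
proof -
  have "(s \<cdot> t) ` \<Omega> \<subseteq> t ` \<Omega>"
    using assms(2) unfolding rcomp_def transformation_def by auto
  then show ?thesis using assms(1) by (simp add: card_mono)
qed

lemma sgen_insert_perm_group_cases:
  assumes "finite \<Omega>" and "perm_group \<Omega> G" and "transformation \<Omega> t"
    and "s \<in> sgen (insert t G)"
  shows "s \<in> G \<or> card (s ` \<Omega>) \<le> card (t ` \<Omega>)"
  using assms(4)
proof induction
  case (step x y)
  have "\<forall>a\<in>insert t G. transformation \<Omega> a"
    using assms(2,3) perm_group_transformation by blast
  then have "transformation \<Omega> x" using step.hyps(1) by (rule transformation_sgen)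
  show ?case
  proof (cases "x \<in> G \<and> y \<in> G")
    case True
    then show ?thesis using assms(2) by (simp add: perm_group_def)
  next
    case False
    then have "card (x ` \<Omega>) \<le> card (t ` \<Omega>) \<or> card (y ` \<Omega>) \<le> card (t ` \<Omega>)"
      using step.IH by blast
    then show ?thesis
      using card_image_rcomp_le_left[OF assms(1), of x y]
        card_image_rcomp_le_right[OF assms(1) \<open>transformation \<Omega> x\<close>, of y] by linarith
  qed
qed auto

lemma setprod_idempotents_subset_sgen:
  "G \<subseteq> A \<Longrightarrow> setprod (idempotents (sgen A)) G \<subseteq> sgen A"
  unfolding setprod_def idempotents_def by (auto intro: sgen.intros)

lemma mem_setprod_idempotents_iff:
  assumes pg: "perm_group \<Omega> G" and "G \<subseteq> A" and s: "s \<in> sgen A" "transformation \<Omega> s"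
  shows "s \<in> setprod (idempotents (sgen A)) G \<longleftrightarrow> (\<exists>h\<in>G. \<forall>y\<in>s ` \<Omega>. s (h y) = y)"
proof
  assume "s \<in> setprod (idempotents (sgen A)) G"
  then obtain e g where s_eq: "s = g \<circ> e" and idem: "e \<circ> e = e" and g: "g \<in> G"
    unfolding setprod_def idempotents_def rcomp_def by blast
  have "s (inv g (s x)) = s x" for x
  proof -
    have e_eq: "inv g (s z) = e z" for z
      using s_eq perm_group_permutes[OF pg g] by (simp add: permutes_inverses)
    have "s (inv g (s x)) = s (e x)" by (simp only: e_eq)
    also have "\<dots> = g (e (e x))" by (simp add: s_eq)
    also have "\<dots> = s x" using idem s_eq by (metis comp_apply)
    finally show ?thesis .
  qed
  then show "\<exists>h\<in>G. \<forall>y\<in>s ` \<Omega>. s (h y) = y"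
    using perm_group_inv[OF pg g] by blast
next
  assume "\<exists>h\<in>G. \<forall>y\<in>s ` \<Omega>. s (h y) = y"
  then obtain h where h: "h \<in> G" and fix_image: "\<forall>y\<in>s ` \<Omega>. s (h y) = y" by blast
  have hp: "h permutes \<Omega>" using perm_group_permutes[OF pg h] .
  have "(s \<cdot> h) \<cdot> (s \<cdot> h) = s \<cdot> h"
  proof
    fix x
    show "((s \<cdot> h) \<cdot> (s \<cdot> h)) x = (s \<cdot> h) x"
    proof (cases "x \<in> \<Omega>")
      case True
      then show ?thesis using fix_image by (simp add: rcomp_def)
    next
      case False
      then show ?thesis
        using s(2) hp by (simp add: rcomp_def transformation_def permutes_not_in)
    qed
  qed
  moreover have "s \<cdot> h \<in> sgen A" using h assms(2) by (blast intro: sgen.step[OF s(1)] sgen.base)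
  moreover have "s = (s \<cdot> h) \<cdot> inv h"
    using hp by (simp add: rcomp_def fun_eq_iff permutes_inverses)
  ultimately show "s \<in> setprod (idempotents (sgen A)) G"
    unfolding setprod_def idempotents_def using perm_group_inv[OF pg h] by blast
qed

subsection \<open>Rank 2 transformations and cuts\<close>

lemma fixes_image_if_card_le_1:
  assumes "finite \<Omega>" and "transformation \<Omega> s" and "card (s ` \<Omega>) \<le> 1" and "y \<in> s ` \<Omega>"
  shows "s y = y"
proof -
  have "y \<in> \<Omega>" using assms(2,4) unfolding transformation_def by blast
  then have "s y \<in> s ` \<Omega>" by blast
  moreover have "\<forall>u\<in>s ` \<Omega>. \<forall>v\<in>s ` \<Omega>. u = v"
    using assms(1,3) by (metis One_nat_def card_le_Suc0_iff_eq finite_imageI)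
  ultimately show ?thesis using assms(4) by blast
qed

lemma exists_perm_fixing_image_if_card_le_2:
  assumes fin: "finite \<Omega>" and pg: "perm_group \<Omega> G" and cuts: "crosses_all_cuts \<Omega> G"
    and s: "transformation \<Omega> s" and rank: "card (s ` \<Omega>) \<le> 2"
  shows "\<exists>h\<in>G. \<forall>y\<in>s ` \<Omega>. s (h y) = y"
proof (cases "card (s ` \<Omega>) \<le> 1")
  case True
  then have "\<forall>y\<in>s ` \<Omega>. s (id y) = y" using fixes_image_if_card_le_1[OF fin s] by (metis id_apply)
  then show ?thesis using perm_group_id[OF pg] by blast
next
  case False
  with rank have "card (s ` \<Omega>) = 2" by simp
  then obtain a b where ab: "s ` \<Omega> = {a, b}" "a \<noteq> b" by (meson card_2_iff)
  moreover have "s ` \<Omega> \<subseteq> \<Omega>" using s by (simp add: transformation_def)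
  ultimately have ab_in: "a \<in> \<Omega>" "b \<in> \<Omega>" by auto
  obtain c d where cd: "c \<in> \<Omega>" "s c = a" "d \<in> \<Omega>" "s d = b"
    using ab(1) by (metis imageE insertI1 insertI2)
  define C where "C = {x \<in> \<Omega>. s x = a}"
  have "c \<in> C" "d \<notin> C" using cd ab(2) unfolding C_def by auto
  moreover have "C \<subseteq> \<Omega>" unfolding C_def by blast
  ultimately have "C \<subseteq> \<Omega>" "C \<noteq> {}" "C \<noteq> \<Omega>" using cd(3) by blast+
  then obtain h where h: "h \<in> G" "h a \<in> C" "h b \<notin> C"
    using cuts[unfolded crosses_all_cuts_def, rule_format, OF ab_in ab(2)] by blast
  have "h b \<in> \<Omega>" using perm_group_permutes[OF pg h(1)] ab_in by (simp add: permutes_in_image)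
  then have "s (h b) \<in> {a, b}" using ab(1) by blast
  then have "s (h a) = a" "s (h b) = b" using h(2,3) \<open>h b \<in> \<Omega>\<close> unfolding C_def by auto
  then show ?thesis using h(1) unfolding ab(1) by blast
qed

lemma factorizable_if_crosses_all_cuts:
  assumes fin: "finite \<Omega>" and pg: "perm_group \<Omega> G" and cuts: "crosses_all_cuts \<Omega> G"
    and t: "transformation \<Omega> t" and rank: "rank_on \<Omega> t \<le> 2"
  shows "sgen (insert t G) = setprod (idempotents (sgen (insert t G))) G"
proof
  show "setprod (idempotents (sgen (insert t G))) G \<subseteq> sgen (insert t G)"
    by (rule setprod_idempotents_subset_sgen) blast
next
  show "sgen (insert t G) \<subseteq> setprod (idempotents (sgen (insert t G))) G"
  proof
    fix s assume s_in: "s \<in> sgen (insert t G)"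
    have "\<forall>a\<in>insert t G. transformation \<Omega> a"
      using pg t perm_group_transformation by blast
    then have s: "transformation \<Omega> s" using s_in by (rule transformation_sgen)
    have "\<exists>h\<in>G. \<forall>y\<in>s ` \<Omega>. s (h y) = y"
    proof (cases "s \<in> G")
      case True
      have "\<forall>y. s (inv s y) = y"
        using perm_group_permutes[OF pg True] by (simp add: permutes_inverses)
      then show ?thesis using perm_group_inv[OF pg True] by blast
    next
      case False
      then have "card (s ` \<Omega>) \<le> 2"
        using sgen_insert_perm_group_cases[OF fin pg t s_in] rank by (simp add: rank_on_def)
      then show ?thesis by (rule exists_perm_fixing_image_if_card_le_2[OF fin pg cuts s])
    qed
    then show "s \<in> setprod (idempotents (sgen (insert t G))) G"
      using mem_setprod_idempotents_iff[OF pg _ s_in s] by blast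
  qed
qed

lemma crosses_all_cuts_if_factorizable:
  assumes pg: "perm_group \<Omega> G"
    and factorizable: "\<forall>t. transformation \<Omega> t \<and> rank_on \<Omega> t = 2 \<longrightarrow>
            sgen (insert t G) = setprod (idempotents (sgen (insert t G))) G"
  shows "crosses_all_cuts \<Omega> G"
  unfolding crosses_all_cuts_def
proof (intro ballI impI allI)
  fix a b C assume ab: "a \<in> \<Omega>" "b \<in> \<Omega>" "a \<noteq> b" and C: "C \<subseteq> \<Omega>" "C \<noteq> {}" "C \<noteq> \<Omega>"
  define t where "t x = (if x \<in> C then a else if x \<in> \<Omega> then b else x)" for x
  have t: "transformation \<Omega> t" using ab C unfolding transformation_def t_def by auto
  have image_t: "t ` \<Omega> = {a, b}" using C unfolding t_def by auto
  then have "rank_on \<Omega> t = 2" using ab(3) by (simp add: rank_on_def)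
  then have "t \<in> setprod (idempotents (sgen (insert t G))) G"
    using factorizable t sgen.base[of t "insert t G"] by auto
  then obtain h where h: "h \<in> G" "t (h a) = a" "t (h b) = b"
    using mem_setprod_idempotents_iff[OF pg _ sgen.base t, of "insert t G"] image_t by auto
  have "h a \<in> \<Omega>" using perm_group_permutes[OF pg h(1)] ab(1) by (simp add: permutes_in_image)
  then show "\<exists>h\<in>G. h a \<in> C \<and> h b \<notin> C"
    using h ab(3) unfolding t_def by (auto split: if_splits)
qed

subsection \<open>Primitivity and cuts\<close>

lemma crosses_all_cuts_imp_primitive:
  assumes pg: "perm_group \<Omega> G" and cuts: "crosses_all_cuts \<Omega> G"
  shows "primitive \<Omega> G"
  unfolding primitive_def
proof (intro conjI allI impI)
  show "transitive_on \<Omega> G"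
    unfolding transitive_on_def
  proof (intro ballI, rule ccontr)
    fix x y assume xy: "x \<in> \<Omega>" "y \<in> \<Omega>" and not_reached: "\<not> (\<exists>g\<in>G. g x = y)"
    define C where "C = \<Omega> - {g x | g. g \<in> G}"
    have "x = id x" by simp
    then have "x \<notin> C" using perm_group_id[OF pg] unfolding C_def by blast
    moreover have "y \<in> C" using xy(2) not_reached unfolding C_def by blast
    moreover have "C \<subseteq> \<Omega>" unfolding C_def by blast
    ultimately obtain h where "h \<in> G" "h x \<in> C"
      using cuts xy unfolding crosses_all_cuts_def by (metis empty_iff)
    then show False unfolding C_def by blast
  qed
next
  fix B assume B: "is_block \<Omega> G B"
  show "card B \<le> 1 \<or> B = \<Omega>"
  proof (rule ccontr)
    assume "\<not> (card B \<le> 1 \<or> B = \<Omega>)"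
    then have "\<not> card B \<le> Suc 0" "B \<noteq> \<Omega>" by simp_all
    moreover have "B \<subseteq> \<Omega>" using B by (simp add: is_block_def)
    ultimately obtain a b where ab: "a \<in> B" "b \<in> B" "a \<noteq> b"
      using card_le_Suc0_iff_eq[of B] card.infinite by force
    obtain h where h: "h \<in> G" "h a \<in> B" "h b \<notin> B"
      using cuts ab \<open>B \<subseteq> \<Omega>\<close> \<open>B \<noteq> \<Omega>\<close> unfolding crosses_all_cuts_def by blast
    then have "h ` B = B" using B ab(1) unfolding is_block_def by blast
    then show False using h(3) ab(2) by blast
  qed
qed

lemma rtrancl_crossing_edge:
  assumes "(x, y) \<in> R\<^sup>*" and "x \<in> C" and "y \<notin> C"
  shows "\<exists>u v. (u, v) \<in> R \<and> u \<in> C \<and> v \<notin> C"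
  using assms by (induction rule: rtrancl_induct) blast+

lemma is_block_invariant_class:
  assumes fin: "finite \<Omega>" and pg: "perm_group \<Omega> G"
    and "sym R" and "trans R" and invariant: "\<And>g x y. g \<in> G \<Longrightarrow> (x, y) \<in> R \<Longrightarrow> (g x, g y) \<in> R"
  shows "is_block \<Omega> G {x \<in> \<Omega>. (a, x) \<in> R}"
  unfolding is_block_def
proof (intro conjI ballI)
  let ?K = "{x \<in> \<Omega>. (a, x) \<in> R}"
  fix g assume g: "g \<in> G"
  have gp: "g permutes \<Omega>" using perm_group_permutes[OF pg g] .
  show "g ` ?K = ?K \<or> g ` ?K \<inter> ?K = {}"
  proof (rule disjCI)
    assume "g ` ?K \<inter> ?K \<noteq> {}"
    then obtain x where x: "x \<in> ?K" "g x \<in> ?K" by blast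
    have "g ` ?K \<subseteq> ?K"
    proof
      fix z assume "z \<in> g ` ?K"
      then obtain y where y: "y \<in> ?K" "z = g y" by blast
      have "(x, y) \<in> R" using x(1) y(1) \<open>sym R\<close> \<open>trans R\<close> by (blast dest: symD transD)
      then have "(a, g y) \<in> R" using invariant[OF g] x(2) \<open>trans R\<close> by (blast dest: transD)
      then show "z \<in> ?K" using y gp by (simp add: permutes_in_image)
    qed
    moreover have "card (g ` ?K) = card ?K"
      using permutes_inj[OF gp] by (simp add: card_image inj_on_subset)
    ultimately show "g ` ?K = ?K" using fin by (simp add: card_subset_eq)
  qed
qed auto

definition orbital_graph :: "('a \<Rightarrow> 'a) set \<Rightarrow> 'a \<Rightarrow> 'a \<Rightarrow> ('a \<times> 'a) set" where
  "orbital_graph G a b = {(h a, h b) | h. h \<in> G}"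

lemma orbital_graph_rtrancl_invariant:
  assumes pg: "perm_group \<Omega> G" and g: "g \<in> G" and "(x, y) \<in> (orbital_graph G a b)\<^sup>*"
  shows "(g x, g y) \<in> (orbital_graph G a b)\<^sup>*"
  using assms(3)
proof induction
  case (step y z)
  then obtain h where h: "h \<in> G" "y = h a" "z = h b" by (auto simp: orbital_graph_def)
  then have "(g y, g z) = ((g \<circ> h) a, (g \<circ> h) b)" by simp
  moreover have "g \<circ> h \<in> G" using perm_group_comp[OF pg h(1) g] .
  ultimately have "(g y, g z) \<in> orbital_graph G a b" unfolding orbital_graph_def by blast
  with step.IH show ?case by (rule rtrancl_into_rtrancl)
qed simp

lemma orbital_graph_funpow_path:
  assumes pg: "perm_group \<Omega> G" and g: "g \<in> G" "g a = b"
  shows "(b, (g ^^ Suc n) a) \<in> (orbital_graph G a b)\<^sup>*"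
proof (induction n)
  case (Suc n)
  have "((g ^^ Suc n) a, (g ^^ Suc n) b) \<in> orbital_graph G a b"
    using perm_group_funpow[OF pg g(1)] unfolding orbital_graph_def by blast
  then have "((g ^^ Suc n) a, (g ^^ Suc (Suc n)) a) \<in> orbital_graph G a b"
    using g(2) by (simp only: funpow_Suc_right comp_apply)
  with Suc.IH show ?case by (rule rtrancl_into_rtrancl)
qed (simp add: g(2))

text \<open>Going around the cycle of some \<open>g\<close> with \<open>g a = b\<close> leads from \<open>b\<close> back to \<open>a\<close>; this is
where finiteness of \<open>\<Omega>\<close> enters.\<close>

lemma sym_orbital_graph_rtrancl:
  assumes fin: "finite \<Omega>" and pg: "perm_group \<Omega> G" and tr: "transitive_on \<Omega> G"
    and "a \<in> \<Omega>" and "b \<in> \<Omega>"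
  shows "sym ((orbital_graph G a b)\<^sup>*)"
proof -
  obtain g where g: "g \<in> G" "g a = b" using tr assms(4,5) unfolding transitive_on_def by blast
  have "permutation g" using fin perm_group_permutes[OF pg g(1)] by (rule permutes_imp_permutation)
  then obtain n where "n > 0" "(g ^^ n) a = a" by (rule permutation_self)
  then have "(b, a) \<in> (orbital_graph G a b)\<^sup>*"
    using orbital_graph_funpow_path[OF pg g, of "n - 1"] by simp
  then have "orbital_graph G a b \<subseteq> ((orbital_graph G a b)\<^sup>*)\<inverse>"
    using orbital_graph_rtrancl_invariant[OF pg] unfolding orbital_graph_def by fastforce
  then have "(orbital_graph G a b)\<^sup>* \<subseteq> ((orbital_graph G a b)\<^sup>*)\<inverse>"
    by (metis rtrancl_converse rtrancl_idemp rtrancl_mono)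
  then show ?thesis by (auto intro: symI)
qed

lemma primitive_imp_crosses_all_cuts:
  assumes fin: "finite \<Omega>" and pg: "perm_group \<Omega> G" and prim: "primitive \<Omega> G"
  shows "crosses_all_cuts \<Omega> G"
  unfolding crosses_all_cuts_def
proof (intro ballI impI allI)
  fix a b C assume ab: "a \<in> \<Omega>" "b \<in> \<Omega>" "a \<noteq> b" and C: "C \<subseteq> \<Omega>" "C \<noteq> {}" "C \<noteq> \<Omega>"
  let ?R = "(orbital_graph G a b)\<^sup>*"
  let ?K = "{x \<in> \<Omega>. (a, x) \<in> ?R}"
  have tr: "transitive_on \<Omega> G" using prim by (simp add: primitive_def)
  have sym: "sym ?R" by (rule sym_orbital_graph_rtrancl[OF fin pg tr ab(1,2)])
  have block: "is_block \<Omega> G ?K"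
    by (rule is_block_invariant_class[OF fin pg sym trans_rtrancl])
      (rule orbital_graph_rtrancl_invariant[OF pg])
  have "(id a, id b) \<in> orbital_graph G a b"
    using perm_group_id[OF pg] unfolding orbital_graph_def by blast
  then have "{a, b} \<subseteq> ?K" using ab(1,2) by auto
  then have "card {a, b} \<le> card ?K" using fin by (intro card_mono) auto
  then have "\<not> card ?K \<le> 1" using ab(3) by simp
  then have K_eq: "?K = \<Omega>" using prim block unfolding primitive_def by blast
  obtain c d where cd: "c \<in> C" "d \<in> \<Omega>" "d \<notin> C" using C by blast
  have "(a, c) \<in> ?R" "(a, d) \<in> ?R" using cd C(1) K_eq by blast+
  then have "(c, d) \<in> ?R" using sym by (meson rtrancl_trans symD)
  then obtain u v where "(u, v) \<in> orbital_graph G a b" "u \<in> C" "v \<notin> C"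
    using rtrancl_crossing_edge[OF _ cd(1,3)] by blast
  then show "\<exists>h\<in>G. h a \<in> C \<and> h b \<notin> C" unfolding orbital_graph_def by blast
qed

theorem theorem1p1:
  fixes \<Omega> :: "'a set" and G :: "('a \<Rightarrow> 'a) set"
  assumes "finite \<Omega>" and "card \<Omega> \<ge> 2" and "perm_group \<Omega> G"
  shows "(\<forall>t. transformation \<Omega> t \<and> rank_on \<Omega> t = 2 \<longrightarrow>
            sgen (insert t G) = setprod (idempotents (sgen (insert t G))) G)
         \<longleftrightarrow> primitive \<Omega> G"
proof -
  have "(\<forall>t. transformation \<Omega> t \<and> rank_on \<Omega> t = 2 \<longrightarrow>
            sgen (insert t G) = setprod (idempotents (sgen (insert t G))) G)
         \<longleftrightarrow> crosses_all_cuts \<Omega> G"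
    using crosses_all_cuts_if_factorizable[OF assms(3)]
      factorizable_if_crosses_all_cuts[OF assms(1,3)] by auto
  also have "\<dots> \<longleftrightarrow> primitive \<Omega> G"
    using crosses_all_cuts_imp_primitive[OF assms(3)]
      primitive_imp_crosses_all_cuts[OF assms(1,3)] by blast
  finally show ?thesis .
qed

end
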